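(* Let $S$ be an abundant semigroup with a quasi-ideal adequate transversal $S^0$, let $R=\{x\in S:e_x=e_{\bar x}\}$, $L=\{x\in S:f_x=f_{\bar x}\}$ and $T=\{(x,a)\in L\times R:\bar x=\bar a\}$. If $(x,a)\in T$ then $xf_a=e_xa$.
   Context: For a semigroup $S$, $\mathcal{R}^\ast=\{(a,b): \text{for all } x,y\in S^1,\ xa=ya \iff xb=yb\}$ and $\mathcal{L}^\ast$ dually. $S$ is abundant if every $\mathcal{R}^\ast$-class and $\mathcal{L}^\ast$-class contains an idempotent; adequate if abundant with commuting idempotents. In an adequate semigroup $a^+,a^\ast$ are the unique idempotents $\mathcal{R}^\ast$-, resp. $\mathcal{L}^\ast$-related to $a$. A subsemigroup $U$ of abundant $S$ is a $\ast$-subsemigroup if $U$ is abundant and $\mathcal{L}^\ast_U=\mathcal{L}^\ast_S\cap(U\times U)$, $\mathcal{R}^\ast_U=\mathcal{R}^\ast_S\cap(U\times U)$. An adequate $\ast$-subsemigroup $S^0$ of abundant $S$ is an adequate transversal if for each $x\in S$ there is a unique $\bar x\in S^0$ and idempotents $e,f$ of $S$ with $x=e\bar xf$, $e\,\mathcal{L}\,\bar x^+$, $f\,\mathcal{R}\,\bar x^\ast$; these $e,f$ are unique and denoted $e_x,f_x$. It is a quasi-ideal adequate transversal if moreover $S^0SS^0\subseteq S^0$. *)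

theory Defs
  imports Main
begin

text \<open>A semigroup is given by a carrier set S and a binary operation m on it.
  The monoid S^1 is handled by unfolding the cases where an adjoined identity
  is one of the multipliers.\<close>

definition semigroup_on :: "'a set \<Rightarrow> ('a \<Rightarrow> 'a \<Rightarrow> 'a) \<Rightarrow> bool" where
  "semigroup_on S m \<longleftrightarrow> (\<forall>a\<in>S. \<forall>b\<in>S. m a b \<in> S) \<and>
     (\<forall>a\<in>S. \<forall>b\<in>S. \<forall>c\<in>S. m (m a b) c = m a (m b c))"

definition idem :: "('a \<Rightarrow> 'a \<Rightarrow> 'a) \<Rightarrow> 'a \<Rightarrow> bool" where
  "idem m e \<longleftrightarrow> m e e = e"

text \<open>R* on U: for all x,y in U^1, xa = ya iff xb = yb.\<close>
definition Rstar :: "'a set \<Rightarrow> ('a \<Rightarrow> 'a \<Rightarrow> 'a) \<Rightarrow> 'a \<Rightarrow> 'a \<Rightarrow> bool" where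
  "Rstar U m a b \<longleftrightarrow> a \<in> U \<and> b \<in> U \<and>
     (\<forall>x\<in>U. \<forall>y\<in>U. m x a = m y a \<longleftrightarrow> m x b = m y b) \<and>
     (\<forall>x\<in>U. m x a = a \<longleftrightarrow> m x b = b)"

text \<open>L* on U: for all x,y in U^1, ax = ay iff bx = by.\<close>
definition Lstar :: "'a set \<Rightarrow> ('a \<Rightarrow> 'a \<Rightarrow> 'a) \<Rightarrow> 'a \<Rightarrow> 'a \<Rightarrow> bool" where
  "Lstar U m a b \<longleftrightarrow> a \<in> U \<and> b \<in> U \<and>
     (\<forall>x\<in>U. \<forall>y\<in>U. m a x = m a y \<longleftrightarrow> m b x = m b y) \<and>
     (\<forall>x\<in>U. m a x = a \<longleftrightarrow> m b x = b)"

definition abundant :: "'a set \<Rightarrow> ('a \<Rightarrow> 'a \<Rightarrow> 'a) \<Rightarrow> bool" where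
  "abundant U m \<longleftrightarrow>
     (\<forall>a\<in>U. \<exists>e\<in>U. idem m e \<and> Rstar U m a e) \<and>
     (\<forall>a\<in>U. \<exists>e\<in>U. idem m e \<and> Lstar U m a e)"

definition adequate :: "'a set \<Rightarrow> ('a \<Rightarrow> 'a \<Rightarrow> 'a) \<Rightarrow> bool" where
  "adequate U m \<longleftrightarrow> abundant U m \<and>
     (\<forall>e\<in>U. \<forall>f\<in>U. idem m e \<and> idem m f \<longrightarrow> m e f = m f e)"

definition plus_of :: "'a set \<Rightarrow> ('a \<Rightarrow> 'a \<Rightarrow> 'a) \<Rightarrow> 'a \<Rightarrow> 'a" where
  "plus_of U m a = (THE e. e \<in> U \<and> idem m e \<and> Rstar U m a e)"

definition star_of :: "'a set \<Rightarrow> ('a \<Rightarrow> 'a \<Rightarrow> 'a) \<Rightarrow> 'a \<Rightarrow> 'a" where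
  "star_of U m a = (THE e. e \<in> U \<and> idem m e \<and> Lstar U m a e)"

definition star_subsemigroup :: "'a set \<Rightarrow> 'a set \<Rightarrow> ('a \<Rightarrow> 'a \<Rightarrow> 'a) \<Rightarrow> bool" where
  "star_subsemigroup U S m \<longleftrightarrow> U \<subseteq> S \<and> (\<forall>a\<in>U. \<forall>b\<in>U. m a b \<in> U) \<and> abundant U m \<and>
     (\<forall>a\<in>U. \<forall>b\<in>U. Lstar U m a b \<longleftrightarrow> Lstar S m a b) \<and>
     (\<forall>a\<in>U. \<forall>b\<in>U. Rstar U m a b \<longleftrightarrow> Rstar S m a b)"

text \<open>Green's relations L and R on S (S^1 a = S^1 b, resp. a S^1 = b S^1).\<close>
definition greenL :: "'a set \<Rightarrow> ('a \<Rightarrow> 'a \<Rightarrow> 'a) \<Rightarrow> 'a \<Rightarrow> 'a \<Rightarrow> bool" where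
  "greenL S m a b \<longleftrightarrow> a \<in> S \<and> b \<in> S \<and>
     (a = b \<or> (\<exists>u\<in>S. a = m u b)) \<and> (b = a \<or> (\<exists>v\<in>S. b = m v a))"

definition greenR :: "'a set \<Rightarrow> ('a \<Rightarrow> 'a \<Rightarrow> 'a) \<Rightarrow> 'a \<Rightarrow> 'a \<Rightarrow> bool" where
  "greenR S m a b \<longleftrightarrow> a \<in> S \<and> b \<in> S \<and>
     (a = b \<or> (\<exists>u\<in>S. a = m b u)) \<and> (b = a \<or> (\<exists>v\<in>S. b = m a v))"

definition tdecomp :: "'a set \<Rightarrow> 'a set \<Rightarrow> ('a \<Rightarrow> 'a \<Rightarrow> 'a) \<Rightarrow> 'a \<Rightarrow> 'a \<Rightarrow> 'a \<Rightarrow> 'a \<Rightarrow> bool" where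
  "tdecomp S S0 m x xb e f \<longleftrightarrow> xb \<in> S0 \<and> e \<in> S \<and> f \<in> S \<and> idem m e \<and> idem m f \<and>
     x = m (m e xb) f \<and> greenL S m e (plus_of S0 m xb) \<and> greenR S m f (star_of S0 m xb)"

definition adequate_transversal :: "'a set \<Rightarrow> 'a set \<Rightarrow> ('a \<Rightarrow> 'a \<Rightarrow> 'a) \<Rightarrow> bool" where
  "adequate_transversal S0 S m \<longleftrightarrow> adequate S0 m \<and> star_subsemigroup S0 S m \<and>
     (\<forall>x\<in>S. \<exists>!xb. \<exists>e f. tdecomp S S0 m x xb e f)"

definition quasi_ideal_adequate_transversal :: "'a set \<Rightarrow> 'a set \<Rightarrow> ('a \<Rightarrow> 'a \<Rightarrow> 'a) \<Rightarrow> bool" where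
  "quasi_ideal_adequate_transversal S0 S m \<longleftrightarrow> adequate_transversal S0 S m \<and>
     (\<forall>a\<in>S0. \<forall>s\<in>S. \<forall>b\<in>S0. m (m a s) b \<in> S0)"

definition bar :: "'a set \<Rightarrow> 'a set \<Rightarrow> ('a \<Rightarrow> 'a \<Rightarrow> 'a) \<Rightarrow> 'a \<Rightarrow> 'a" where
  "bar S S0 m x = (THE xb. \<exists>e f. tdecomp S S0 m x xb e f)"

definition e_of :: "'a set \<Rightarrow> 'a set \<Rightarrow> ('a \<Rightarrow> 'a \<Rightarrow> 'a) \<Rightarrow> 'a \<Rightarrow> 'a" where
  "e_of S S0 m x = (THE e. \<exists>f. tdecomp S S0 m x (bar S S0 m x) e f)"

definition f_of :: "'a set \<Rightarrow> 'a set \<Rightarrow> ('a \<Rightarrow> 'a \<Rightarrow> 'a) \<Rightarrow> 'a \<Rightarrow> 'a" where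
  "f_of S S0 m x = (THE f. \<exists>e. tdecomp S S0 m x (bar S S0 m x) e f)"

definition R_set :: "'a set \<Rightarrow> 'a set \<Rightarrow> ('a \<Rightarrow> 'a \<Rightarrow> 'a) \<Rightarrow> 'a set" where
  "R_set S S0 m = {x\<in>S. e_of S S0 m x = e_of S S0 m (bar S S0 m x)}"

definition L_set :: "'a set \<Rightarrow> 'a set \<Rightarrow> ('a \<Rightarrow> 'a \<Rightarrow> 'a) \<Rightarrow> 'a set" where
  "L_set S S0 m = {x\<in>S. f_of S S0 m x = f_of S S0 m (bar S S0 m x)}"

definition T_set :: "'a set \<Rightarrow> 'a set \<Rightarrow> ('a \<Rightarrow> 'a \<Rightarrow> 'a) \<Rightarrow> ('a \<times> 'a) set" where
  "T_set S S0 m = {(x, a). x \<in> L_set S S0 m \<and> a \<in> R_set S S0 m \<and> bar S S0 m x = bar S S0 m a}"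

end

theory Submission
  imports Defs
begin

text \<open>Since \<open>x\<close> and \<open>a\<close> lie over the same \<open>b \<in> S\<^sup>0\<close> and an element of \<open>S\<^sup>0\<close> is
  its own transversal decomposition \<open>b = b\<^sup>+ b b\<^sup>*\<close>, the hypotheses \<open>f\<^sub>x = f\<^sub>b\<close> and
  \<open>e\<^sub>a = e\<^sub>b\<close> say \<open>f\<^sub>x = b\<^sup>*\<close> and \<open>e\<^sub>a = b\<^sup>+\<close>. Hence \<open>x = e\<^sub>x b\<close> and \<open>a = b f\<^sub>a\<close>, and both
  sides of the identity equal \<open>e\<^sub>x b f\<^sub>a\<close>.\<close>

lemma Rstar_idem_left_unit:
  assumes "Rstar U m b e" "idem m e"
  shows "m e b = b"
  using assms unfolding Rstar_def idem_def by blast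

lemma adequate_Rstar_idem_unique:
  assumes ad: "adequate U m"
    and e: "Rstar U m b e" "idem m e" and e': "Rstar U m b e'" "idem m e'"
  shows "e = e'"
proof -
  have U: "e \<in> U" "e' \<in> U" using e(1) e'(1) unfolding Rstar_def by blast+
  have "m e e' = e'"
    using Rstar_idem_left_unit[OF e] e'(1) U unfolding Rstar_def by blast
  moreover have "m e' e = e"
    using Rstar_idem_left_unit[OF e'] e(1) U unfolding Rstar_def by blast
  moreover have "m e e' = m e' e"
    using ad U e(2) e'(2) unfolding adequate_def by blast
  ultimately show ?thesis by simp
qed

lemma plus_of_props:
  assumes ad: "adequate U m" and b: "b \<in> U"
  shows "idem m (plus_of U m b) \<and> Rstar U m b (plus_of U m b)"
proof -
  have "\<exists>!e. e \<in> U \<and> idem m e \<and> Rstar U m b e"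
    using ad b adequate_Rstar_idem_unique[OF ad] unfolding adequate_def abundant_def by blast
  from theI'[OF this] show ?thesis unfolding plus_of_def by blast
qed

lemma Lstar_eq_Rstar_dual: "Lstar U m = Rstar U (\<lambda>x y. m y x)"
  unfolding Lstar_def Rstar_def by (intro ext) simp

lemma adequate_dual: "adequate U (\<lambda>x y. m y x) = adequate U m"
proof -
  have "Rstar U (\<lambda>x y. m y x) = Lstar U m" by (simp add: Lstar_eq_Rstar_dual)
  moreover have "Lstar U (\<lambda>x y. m y x) = Rstar U m" by (simp add: Lstar_eq_Rstar_dual)
  ultimately show ?thesis unfolding adequate_def abundant_def idem_def by auto
qed

lemma star_of_eq_plus_of_dual: "star_of U m = plus_of U (\<lambda>x y. m y x)"
  unfolding star_of_def plus_of_def Lstar_eq_Rstar_dual idem_def by simp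

lemma greenL_eq_greenR_dual: "greenL S m = greenR S (\<lambda>x y. m y x)"
  unfolding greenL_def greenR_def by (intro ext) simp

lemma semigroup_on_dual: "semigroup_on S m \<Longrightarrow> semigroup_on S (\<lambda>x y. m y x)"
  unfolding semigroup_on_def by simp

lemma Lstar_idem_right_unit: "Lstar U m b e \<Longrightarrow> idem m e \<Longrightarrow> m b e = b"
  using Rstar_idem_left_unit[of U "\<lambda>x y. m y x"]
  by (simp add: Lstar_eq_Rstar_dual idem_def)

lemma star_of_props:
  assumes "adequate U m" "b \<in> U"
  shows "idem m (star_of U m b) \<and> Lstar U m b (star_of U m b)"
  using plus_of_props[of U "\<lambda>x y. m y x" b, unfolded adequate_dual[of U m], OF assms]
  unfolding star_of_eq_plus_of_dual Lstar_eq_Rstar_dual idem_def .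

lemma greenR_sym: "greenR S m f q \<Longrightarrow> greenR S m q f"
  unfolding greenR_def by blast

lemma greenR_idem_left_unit:
  assumes sg: "semigroup_on S m" and fq: "greenR S m f q" and q: "idem m q"
  shows "m q f = f"
proof (cases "f = q")
  case False
  then obtain v where v: "v \<in> S" "f = m q v" using fq unfolding greenR_def by blast
  have "q \<in> S" using fq unfolding greenR_def by blast
  then have "m q (m q v) = m (m q q) v" using sg v(1) unfolding semigroup_on_def by simp
  then show ?thesis using v(2) q unfolding idem_def by simp
qed (use q in \<open>simp add: idem_def\<close>)

lemma greenL_idem_right_unit:
  assumes "semigroup_on S m" "greenL S m e p" "idem m p"
  shows "m e p = e"
  using greenR_idem_left_unit[OF semigroup_on_dual[OF assms(1)], of e p] assms(2,3)
  unfolding greenL_eq_greenR_dual idem_def by simp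

lemma greenL_sym: "greenL S m e p \<Longrightarrow> greenL S m p e"
  unfolding greenL_def by blast

locale adequate_transversal_semigroup =
  fixes S S0 :: "'a set" and m :: "'a \<Rightarrow> 'a \<Rightarrow> 'a"
  assumes semigroup: "semigroup_on S m"
    and transversal: "adequate_transversal S0 S m"
begin

lemma closed: "u \<in> S \<Longrightarrow> v \<in> S \<Longrightarrow> m u v \<in> S"
  using semigroup unfolding semigroup_on_def by blast

lemma assoc: "u \<in> S \<Longrightarrow> v \<in> S \<Longrightarrow> w \<in> S \<Longrightarrow> m (m u v) w = m u (m v w)"
  using semigroup unfolding semigroup_on_def by blast

lemma S0_adequate: "adequate S0 m"
  using transversal unfolding adequate_transversal_def by blast

lemma S0_star_subsemigroup: "star_subsemigroup S0 S m"
  using transversal unfolding adequate_transversal_def by blast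

lemma S0_subset: "S0 \<subseteq> S"
  using S0_star_subsemigroup unfolding star_subsemigroup_def by blast

lemma plus_of_in_S0: "b \<in> S0 \<Longrightarrow> plus_of S0 m b \<in> S0"
  using plus_of_props[OF S0_adequate] unfolding Rstar_def by blast

lemma star_of_in_S0: "b \<in> S0 \<Longrightarrow> star_of S0 m b \<in> S0"
  using star_of_props[OF S0_adequate] unfolding Lstar_def by blast

lemma Rstar_plus_of: "b \<in> S0 \<Longrightarrow> Rstar S m b (plus_of S0 m b)"
  using plus_of_props[OF S0_adequate] plus_of_in_S0 S0_star_subsemigroup
  unfolding star_subsemigroup_def by blast

lemma Lstar_star_of: "b \<in> S0 \<Longrightarrow> Lstar S m b (star_of S0 m b)"
  using star_of_props[OF S0_adequate] star_of_in_S0 S0_star_subsemigroup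
  unfolding star_subsemigroup_def by blast

lemma plus_of_left_unit: "b \<in> S0 \<Longrightarrow> m (plus_of S0 m b) b = b"
  using Rstar_idem_left_unit[of S0 m b] plus_of_props[OF S0_adequate, of b] by blast

lemma star_of_right_unit: "b \<in> S0 \<Longrightarrow> m b (star_of S0 m b) = b"
  using Lstar_idem_right_unit[of S0 m b] star_of_props[OF S0_adequate, of b] by blast

lemma tdecomp_absorb:
  assumes d: "tdecomp S S0 m x b e f"
  defines "p \<equiv> plus_of S0 m b" and "q \<equiv> star_of S0 m b"
  shows "m x q = m e b" and "m p x = m b f"
proof -
  have b: "b \<in> S0" and S: "e \<in> S" "f \<in> S" "b \<in> S" "p \<in> S" "q \<in> S"
    and idem: "idem m e" "idem m f" and x: "x = m (m e b) f"
    and ep: "greenL S m e p" and fq: "greenR S m f q"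
    using d S0_subset plus_of_in_S0 star_of_in_S0 unfolding tdecomp_def p_def q_def by auto
  have "m x q = m (m e b) (m f q)" using x S by (simp add: closed assoc)
  also have "m f q = q" using greenR_idem_left_unit[OF semigroup greenR_sym[OF fq] idem(2)] .
  also have "m (m e b) q = m e (m b q)" using S by (simp add: assoc)
  also have "m b q = b" using star_of_right_unit[OF b] unfolding q_def .
  finally show "m x q = m e b" .
  have "m p x = m (m (m p e) b) f" using x S by (simp add: closed assoc)
  also have "m p e = p" using greenL_idem_right_unit[OF semigroup greenL_sym[OF ep] idem(1)] .
  also have "m p b = b" using plus_of_left_unit[OF b] unfolding p_def .
  finally show "m p x = m b f" .
qed

lemma tdecomp_idempotents_unique:
  assumes d: "tdecomp S S0 m x b e f" and d': "tdecomp S S0 m x b e' f'"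
  shows "e = e'" and "f = f'"
proof -
  define p q where "p = plus_of S0 m b" and "q = star_of S0 m b"
  have b: "b \<in> S0" using d unfolding tdecomp_def by blast
  have facts: "u \<in> S" "v \<in> S" "idem m u" "idem m v" "greenL S m u p" "greenR S m v q"
    if "tdecomp S S0 m x b u v" for u v
    using that unfolding tdecomp_def p_def q_def by auto
  have "m e b = m e' b" using tdecomp_absorb(1)[OF d] tdecomp_absorb(1)[OF d'] by simp
  then have "m e p = m e' p"
    using Rstar_plus_of[OF b] facts(1)[OF d] facts(1)[OF d'] unfolding Rstar_def p_def by blast
  moreover have "idem m p" using plus_of_props[OF S0_adequate b] unfolding p_def by blast
  ultimately show "e = e'"
    using greenL_idem_right_unit[OF semigroup] facts(5)[OF d] facts(5)[OF d'] by simp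
  have "m b f = m b f'" using tdecomp_absorb(2)[OF d] tdecomp_absorb(2)[OF d'] by simp
  then have "m q f = m q f'"
    using Lstar_star_of[OF b] facts(2)[OF d] facts(2)[OF d'] unfolding Lstar_def q_def by blast
  moreover have "idem m q" using star_of_props[OF S0_adequate b] unfolding q_def by blast
  ultimately show "f = f'"
    using greenR_idem_left_unit[OF semigroup] facts(6)[OF d] facts(6)[OF d'] by simp
qed

lemma tdecomp_determines:
  assumes d: "tdecomp S S0 m x b e f"
  shows "bar S S0 m x = b" "e_of S S0 m x = e" "f_of S S0 m x = f"
proof -
  have "x \<in> S" using d S0_subset closed unfolding tdecomp_def by auto
  then have "\<exists>!xb. \<exists>e f. tdecomp S S0 m x xb e f"
    using transversal unfolding adequate_transversal_def by blast
  then show bar: "bar S S0 m x = b" unfolding bar_def using d by blast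
  show "e_of S S0 m x = e" unfolding e_of_def bar
    using d tdecomp_idempotents_unique(1)[OF d] by blast
  show "f_of S S0 m x = f" unfolding f_of_def bar
    using d tdecomp_idempotents_unique(2)[OF d] by blast
qed

lemma tdecomp_bar:
  assumes "x \<in> S"
  shows "tdecomp S S0 m x (bar S S0 m x) (e_of S S0 m x) (f_of S S0 m x)"
proof -
  obtain b e f where d: "tdecomp S S0 m x b e f"
    using assms transversal unfolding adequate_transversal_def by blast
  with tdecomp_determines[OF d] show ?thesis by simp
qed

lemma tdecomp_S0_self:
  assumes b: "b \<in> S0"
  shows "tdecomp S S0 m b b (plus_of S0 m b) (star_of S0 m b)"
  using b S0_subset plus_of_in_S0 star_of_in_S0 plus_of_left_unit star_of_right_unit
    plus_of_props[OF S0_adequate b] star_of_props[OF S0_adequate b]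
  unfolding tdecomp_def greenL_def greenR_def by auto

lemma T_set_identity:
  assumes "(x, a) \<in> T_set S S0 m"
  shows "m x (f_of S S0 m a) = m (e_of S S0 m x) a"
proof -
  define b ex fa where "b = bar S S0 m x" and "ex = e_of S S0 m x" and "fa = f_of S S0 m a"
  have x: "x \<in> S" "f_of S S0 m x = f_of S S0 m b"
    and a: "a \<in> S" "e_of S S0 m a = e_of S S0 m b" "bar S S0 m a = b"
    using assms unfolding T_set_def L_set_def R_set_def b_def by auto
  have dx: "tdecomp S S0 m x b ex (f_of S S0 m x)"
    using tdecomp_bar[OF x(1)] unfolding b_def ex_def .
  have da: "tdecomp S S0 m a b (e_of S S0 m a) fa"
    using tdecomp_bar[OF a(1)] unfolding a(3) fa_def .
  have b: "b \<in> S0" and S: "ex \<in> S" "fa \<in> S" "b \<in> S"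
    using dx da S0_subset unfolding tdecomp_def by auto
  have fx: "f_of S S0 m x = star_of S0 m b" and ea: "e_of S S0 m a = plus_of S0 m b"
    using x(2) a(2) tdecomp_determines[OF tdecomp_S0_self[OF b]] by simp_all
  have "x = m (m ex b) (star_of S0 m b)" using dx unfolding fx tdecomp_def by simp
  also have "\<dots> = m ex b" using S star_of_right_unit[OF b] star_of_in_S0[OF b] S0_subset
    by (simp add: assoc subset_iff)
  finally have x_eq: "x = m ex b" .
  have "a = m (m (plus_of S0 m b) b) fa" using da unfolding ea tdecomp_def by simp
  then have a_eq: "a = m b fa" using plus_of_left_unit[OF b] by simp
  have "m x fa = m ex a" unfolding x_eq a_eq using S by (simp add: assoc)
  then show ?thesis unfolding ex_def fa_def .
qed

end

theorem lemma2p4: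
  fixes S S0 :: "'a set" and m :: "'a \<Rightarrow> 'a \<Rightarrow> 'a" and x a :: 'a
  assumes "semigroup_on S m"
    and "abundant S m"
    and "quasi_ideal_adequate_transversal S0 S m"
    and "(x, a) \<in> T_set S S0 m"
  shows "m x (f_of S S0 m a) = m (e_of S S0 m x) a"
proof -
  interpret adequate_transversal_semigroup S S0 m
    using assms(1,3) unfolding quasi_ideal_adequate_transversal_def
    by unfold_locales blast+
  show ?thesis using T_set_identity[OF assms(4)] .
qed

end
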